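(* For every $n\ge 5$, the sensitivity to synchronism of elementary cellular automaton rule $8$ satisfies $\mu(f_{8,n})=\dfrac{\phi^{2n}+\phi^{-2n}-2^n}{3^n-2^{n+1}+2}$, where $\phi=\frac{1+\sqrt5}{2}$ is the golden ratio.
   Context: Cells are indexed by $\mathbb{Z}_n=\{0,\dots,n-1\}$, indices modulo $n$. Rule $8$ has local rule $r_8(x_1,x_2,x_3)=\neg x_1\wedge x_2\wedge x_3$ and global function $f_{8,n}(x)_i=r_8(x_{i-1},x_i,x_{i+1})$. An update schedule is an ordered partition $\Delta=(\Delta_1,\dots,\Delta_k)$ of $\mathbb{Z}_n$ into nonempty blocks; $\mathcal{P}_n$ is the set of them. For a block $B$ let $f^{(B)}(x)_i=f_{8,n}(x)_i$ if $i\in B$ and $x_i$ otherwise; $f^{(\Delta)}_{8,n}=f^{(\Delta_k)}\circ\cdots\circ f^{(\Delta_1)}$. The dynamics of $\Delta$ is the transition digraph with arcs $(x,f^{(\Delta)}_{8,n}(x))$; $\mathcal{D}(f_{8,n})$ is the set of distinct dynamics over $\Delta\in\mathcal{P}_n$. The sensitivity to synchronism is $\mu(f_{8,n})=|\mathcal{D}(f_{8,n})|/(3^n-2^{n+1}+2)$. *)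

theory Defs
  imports Complex_Main
begin

text \<open>Configurations of size n: functions nat => bool, identified with {0,1}^n
  by requiring all cells at positions >= n to be False.\<close>
definition configs :: "nat \<Rightarrow> (nat \<Rightarrow> bool) set" where
  "configs n = {x. \<forall>i\<ge>n. \<not> x i}"

definition r8 :: "bool \<Rightarrow> bool \<Rightarrow> bool \<Rightarrow> bool" where
  "r8 x1 x2 x3 = (\<not> x1 \<and> x2 \<and> x3)"

definition f8 :: "nat \<Rightarrow> (nat \<Rightarrow> bool) \<Rightarrow> (nat \<Rightarrow> bool)" where
  "f8 n x = (\<lambda>i. if i < n then r8 (x ((i + n - 1) mod n)) (x i) (x ((i + 1) mod n)) else False)"

definition block_update :: "nat \<Rightarrow> nat set \<Rightarrow> (nat \<Rightarrow> bool) \<Rightarrow> (nat \<Rightarrow> bool)" where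
  "block_update n B x = (\<lambda>i. if i \<in> B then f8 n x i else x i)"

definition schedules :: "nat \<Rightarrow> nat set list set" where
  "schedules n = {\<Delta>. (\<forall>B\<in>set \<Delta>. B \<noteq> {}) \<and>
      (\<forall>i j. i < length \<Delta> \<longrightarrow> j < length \<Delta> \<longrightarrow> i \<noteq> j \<longrightarrow> \<Delta> ! i \<inter> \<Delta> ! j = {}) \<and>
      \<Union>(set \<Delta>) = {0..<n}}"

text \<open>f^(Delta) = f^(Delta_k) o ... o f^(Delta_1): Delta_1 applied first.\<close>
definition sched_update :: "nat \<Rightarrow> nat set list \<Rightarrow> (nat \<Rightarrow> bool) \<Rightarrow> (nat \<Rightarrow> bool)" where
  "sched_update n \<Delta> x = fold (block_update n) \<Delta> x"

definition dynamics :: "nat \<Rightarrow> nat set list \<Rightarrow> ((nat \<Rightarrow> bool) \<times> (nat \<Rightarrow> bool)) set" where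
  "dynamics n \<Delta> = {(x, sched_update n \<Delta> x) | x. x \<in> configs n}"

definition dyn_set :: "nat \<Rightarrow> ((nat \<Rightarrow> bool) \<times> (nat \<Rightarrow> bool)) set set" where
  "dyn_set n = dynamics n ` schedules n"

definition sensitivity :: "nat \<Rightarrow> real" where
  "sensitivity n = real (card (dyn_set n)) / (3 ^ n - 2 ^ (n + 1) + 2)"

definition golden :: real where
  "golden = (1 + sqrt 5) / 2"

end

theory Submission
  imports Defs
begin

(* A schedule matters only through the stamp t i of each cell i, the index of the block containing
   it. When the blocks are executed in order, cell j reads the new value of a neighbour exactly when
   that neighbour has a smaller stamp. For rule 8 this gives a closed form of the result that depends
   on t only through its pattern of marks: for each cell, whether its right neighbour is updated
   strictly earlier, else whether its left neighbour is, else neither. For n >= 5 distinct patterns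
   are told apart by configurations supported on four consecutive cells, so the dynamics are counted
   by the realisable patterns. These are the cyclic words over the three marks avoiding the factor
   Right_first Left_first, except the constant word Right_first and the 2^n - 1 words that contain
   Left_first but not Right_first. Cyclic words avoiding the factor are counted by the trace of M^n
   for the transfer matrix M = [[1,0,1],[1,1,1],[1,1,1]], whose nonzero eigenvalues are phi^2 and
   phi^-2. *)

definition left_of :: "nat \<Rightarrow> nat \<Rightarrow> nat" where
  "left_of n j = (j + n - 1) mod n"

definition right_of :: "nat \<Rightarrow> nat \<Rightarrow> nat" where
  "right_of n j = (j + 1) mod n"

lemma left_of_eq: "j < n \<Longrightarrow> left_of n j = (if j = 0 then n - 1 else j - 1)"
  unfolding left_of_def by (cases "j = 0") (auto simp: mod_if)

lemma right_of_eq: "j < n \<Longrightarrow> right_of n j = (if j = n - 1 then 0 else j + 1)"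
  unfolding right_of_def by (auto simp: mod_if)

lemma left_of_less: "j < n \<Longrightarrow> left_of n j < n"
  by (auto simp: left_of_eq)

lemma right_of_less: "j < n \<Longrightarrow> right_of n j < n"
  by (auto simp: right_of_eq)

lemma right_of_left_of [simp]: "j < n \<Longrightarrow> right_of n (left_of n j) = j"
  by (auto simp: left_of_eq right_of_eq)

lemma left_of_right_of [simp]: "j < n \<Longrightarrow> left_of n (right_of n j) = j"
  by (auto simp: left_of_eq right_of_eq)

lemma neighbours_distinct:
  assumes "j < n" "5 \<le> n"
  defines "l \<equiv> left_of n"
  shows "l (l (l j)) \<notin> {l (l j), l j, j, right_of n j}" "l j \<notin> {j, right_of n j}"
  using assms by (auto simp: left_of_eq right_of_eq)

lemma bij_betw_right_of: "bij_betw (right_of n) {..<n} {..<n}"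
  by (rule bij_betw_byWitness[where f' = "left_of n"]) (auto simp: left_of_less right_of_less)

lemma sum_right_of: "(\<Sum>j<n. f (right_of n j)) = (\<Sum>j<n. f j)"
  using sum.reindex_bij_betw[OF bij_betw_right_of] .

section \<open>Block-sequential updates through stamps\<close>

(* If x j holds, left_seen n t x j is the value of the left neighbour that cell j reads when it is
   updated. *)
function left_seen :: "nat \<Rightarrow> (nat \<Rightarrow> nat) \<Rightarrow> (nat \<Rightarrow> bool) \<Rightarrow> nat \<Rightarrow> bool" where
  "left_seen n t x j =
     (x (left_of n j) \<and> (if t (left_of n j) < t j then \<not> left_seen n t x (left_of n j) else True))"
  by pat_completeness auto
termination by (relation "measure (\<lambda>(n, t, x, j). t j)") auto

declare left_seen.simps [simp del]

(* A right neighbour updated earlier has read x j, so it can only be True if x j is False. *)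
definition stamp_update :: "nat \<Rightarrow> (nat \<Rightarrow> nat) \<Rightarrow> (nat \<Rightarrow> bool) \<Rightarrow> nat \<Rightarrow> bool" where
  "stamp_update n t x j \<longleftrightarrow>
     j < n \<and> x j \<and> x (right_of n j) \<and> t j \<le> t (right_of n j) \<and> \<not> left_seen n t x j"

lemma stamp_update_local:
  assumes "j < n"
  shows "stamp_update n t x j =
    r8 (if t (left_of n j) < t j then stamp_update n t x (left_of n j) else x (left_of n j)) (x j)
       (if t (right_of n j) < t j then stamp_update n t x (right_of n j) else x (right_of n j))"
  using assms left_seen.simps[of n t x j] left_seen.simps[of n t x "right_of n j"]
  by (auto simp: stamp_update_def r8_def left_of_less right_of_less)

definition stamp_blocks :: "nat \<Rightarrow> (nat \<Rightarrow> nat) \<Rightarrow> nat list \<Rightarrow> nat set list" where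
  "stamp_blocks n t ks = map (\<lambda>k. {i. i < n \<and> t i = k}) ks"

lemma fold_stamp_blocks:
  assumes "x \<in> configs n" and "sorted_wrt (<) ks" and "\<forall>k\<in>set ks. m \<le> k"
    and "\<forall>i<n. t i < m \<or> t i \<in> set ks"
    and "\<And>j. z j = (if j < n \<and> t j < m then stamp_update n t x j else x j)"
  shows "fold (block_update n) (stamp_blocks n t ks) z = stamp_update n t x"
  using assms(2-)
proof (induction ks arbitrary: m z)
  case Nil
  then show ?case
    using assms(1) by (auto simp: stamp_blocks_def configs_def stamp_update_def)
next
  case (Cons k ks)
  have "m \<le> k" and later: "\<forall>k'\<in>set ks. k < k'"
    using Cons.prems(1,2) by auto
  have stamps: "t i < m \<or> t i = k \<or> k < t i" if "i < n" for i
    using Cons.prems(3) later that by auto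
  define z' where "z' = block_update n {i. i < n \<and> t i = k} z"
  have z'_eq: "z' j = (if j < n \<and> t j < Suc k then stamp_update n t x j else x j)" for j
  proof (cases "j < n \<and> t j = k")
    case True
    have earlier: "(t i < m) = (t i < t j)" if "i < n" for i
      using stamps[OF that] True \<open>m \<le> k\<close> by auto
    have "z' j = r8 (z (left_of n j)) (z j) (z (right_of n j))"
      using True by (simp add: z'_def block_update_def f8_def left_of_def right_of_def)
    also have "\<dots> = stamp_update n t x j"
      using stamp_update_local[of j n t x] True Cons.prems(4) \<open>m \<le> k\<close>
        earlier[OF left_of_less] earlier[OF right_of_less]
      by (simp add: left_of_less right_of_less)
    finally show ?thesis
      using True by simp
  next
    case False
    then show ?thesis
      using Cons.prems(4) stamps[of j] \<open>m \<le> k\<close> by (auto simp: z'_def block_update_def)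
  qed
  have "fold (block_update n) (stamp_blocks n t ks) z' = stamp_update n t x"
  proof (rule Cons.IH)
    show "\<forall>i<n. t i < Suc k \<or> t i \<in> set ks"
      using Cons.prems(3) \<open>m \<le> k\<close> by fastforce
  qed (use Cons.prems(1) later z'_eq in auto)
  then show ?case
    by (simp add: stamp_blocks_def z'_def)
qed

lemma sched_update_stamp_blocks:
  assumes "x \<in> configs n" "sorted_wrt (<) ks" "\<forall>i<n. t i \<in> set ks"
  shows "sched_update n (stamp_blocks n t ks) x = stamp_update n t x"
  unfolding sched_update_def using assms by (intro fold_stamp_blocks[where m = 0]) auto

lemma schedule_eq_stamp_blocks:
  assumes "\<Delta> \<in> schedules n"
  obtains t where "\<Delta> = stamp_blocks n t [0..<length \<Delta>]" and "\<forall>i<n. t i < length \<Delta>"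
proof -
  have disjoint: "\<Delta> ! k \<inter> \<Delta> ! k' = {}" if "k < length \<Delta>" "k' < length \<Delta>" "k \<noteq> k'" for k k'
    using assms that by (simp add: schedules_def)
  have cover: "\<Union>(set \<Delta>) = {0..<n}"
    using assms by (simp add: schedules_def)
  define t where "t i = (SOME k. k < length \<Delta> \<and> i \<in> \<Delta> ! k)" for i
  have t: "t i < length \<Delta> \<and> i \<in> \<Delta> ! t i" if "i < n" for i
  proof -
    have "\<exists>k. k < length \<Delta> \<and> i \<in> \<Delta> ! k"
      using cover that by (metis UnionE atLeastLessThan_iff in_set_conv_nth zero_le)
    then show ?thesis
      unfolding t_def by (rule someI_ex)
  qed
  have "\<Delta> ! k = {i. i < n \<and> t i = k}" if "k < length \<Delta>" for k
  proof (intro set_eqI iffI)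
    fix i
    assume "i \<in> \<Delta> ! k"
    moreover from this have "i < n"
      using cover that by (metis UnionI atLeastLessThan_iff nth_mem)
    ultimately show "i \<in> {i. i < n \<and> t i = k}"
      using disjoint[OF that, of "t i"] t by blast
  qed (use t in auto)
  then have "\<Delta> = stamp_blocks n t [0..<length \<Delta>]"
    by (intro nth_equalityI) (auto simp: stamp_blocks_def)
  with t that show ?thesis
    by blast
qed

lemma stamp_blocks_in_schedules:
  "stamp_blocks n t (sorted_list_of_set (t ` {..<n})) \<in> schedules n"
proof -
  let ?ks = "sorted_list_of_set (t ` {..<n})"
  have "?ks ! k \<noteq> ?ks ! k'" if "k < length ?ks" "k' < length ?ks" "k \<noteq> k'" for k k'
    using that by (simp add: nth_eq_iff_index_eq)
  then show ?thesis
    by (auto simp: schedules_def stamp_blocks_def)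
qed

definition stamp_dynamics :: "nat \<Rightarrow> (nat \<Rightarrow> nat) \<Rightarrow> ((nat \<Rightarrow> bool) \<times> (nat \<Rightarrow> bool)) set" where
  "stamp_dynamics n t = {(x, stamp_update n t x) | x. x \<in> configs n}"

lemma dyn_set_eq_range_stamp_dynamics: "dyn_set n = range (stamp_dynamics n)"
proof (intro equalityI subsetI)
  fix D
  assume "D \<in> dyn_set n"
  then obtain \<Delta> where \<Delta>: "\<Delta> \<in> schedules n" and D: "D = dynamics n \<Delta>"
    by (auto simp: dyn_set_def)
  obtain t where \<Delta>_eq: "\<Delta> = stamp_blocks n t [0..<length \<Delta>]" and "\<forall>i<n. t i < length \<Delta>"
    using schedule_eq_stamp_blocks[OF \<Delta>] .
  then have "sched_update n \<Delta> x = stamp_update n t x" if "x \<in> configs n" for x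
    by (subst \<Delta>_eq) (intro sched_update_stamp_blocks that; simp)
  then have "D = stamp_dynamics n t"
    unfolding D dynamics_def stamp_dynamics_def by auto
  then show "D \<in> range (stamp_dynamics n)"
    by simp
next
  fix D
  assume "D \<in> range (stamp_dynamics n)"
  then obtain t where D: "D = stamp_dynamics n t"
    by auto
  let ?\<Delta> = "stamp_blocks n t (sorted_list_of_set (t ` {..<n}))"
  have "sched_update n ?\<Delta> x = stamp_update n t x" if "x \<in> configs n" for x
    using that by (simp add: sched_update_stamp_blocks)
  then have "D = dynamics n ?\<Delta>"
    unfolding D dynamics_def stamp_dynamics_def by auto
  then show "D \<in> dyn_set n"
    using stamp_blocks_in_schedules by (auto simp: dyn_set_def)
qed

section \<open>The pattern of a stamp function\<close>

datatype mark = Right_first | Left_first | Neither_first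

definition mark_of :: "nat \<Rightarrow> (nat \<Rightarrow> nat) \<Rightarrow> nat \<Rightarrow> mark" where
  "mark_of n t j =
     (if t (right_of n j) < t j then Right_first
      else if t (left_of n j) < t j then Left_first else Neither_first)"

definition pattern :: "nat \<Rightarrow> (nat \<Rightarrow> nat) \<Rightarrow> mark list" where
  "pattern n t = map (mark_of n t) [0..<n]"

lemma length_pattern [simp]: "length (pattern n t) = n"
  by (simp add: pattern_def)

lemma nth_pattern [simp]: "j < n \<Longrightarrow> pattern n t ! j = mark_of n t j"
  by (simp add: pattern_def)

lemma set_pattern: "set (pattern n t) = mark_of n t ` {..<n}"
  by (auto simp: pattern_def)

lemma left_seen_cong:
  assumes "\<forall>j<n. mark_of n t1 j = mark_of n t2 j"
  shows "j < n \<Longrightarrow> t1 j \<le> t1 (right_of n j) \<Longrightarrow> left_seen n t1 x j = left_seen n t2 x j"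
proof (induction "t1 j" arbitrary: j rule: less_induct)
  case less
  have "mark_of n t1 j = mark_of n t2 j"
    using assms less.prems(1) by blast
  then have "t2 j \<le> t2 (right_of n j)"
    and "(t1 (left_of n j) < t1 j) = (t2 (left_of n j) < t2 j)"
    using less.prems(2) by (auto simp: mark_of_def split: if_splits)
  moreover have "left_seen n t1 x (left_of n j) = left_seen n t2 x (left_of n j)"
    if "t1 (left_of n j) < t1 j"
    using less.hyps[OF that] that less.prems(1) by (simp add: left_of_less)
  ultimately show ?case
    by (simp add: left_seen.simps[of n t1 x j] left_seen.simps[of n t2 x j])
qed

lemma stamp_update_eq_if_pattern_eq:
  assumes "pattern n t1 = pattern n t2"
  shows "stamp_update n t1 x = stamp_update n t2 x"
proof
  fix j
  have marks: "\<forall>j<n. mark_of n t1 j = mark_of n t2 j"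
    using assms by (simp add: pattern_def map_eq_conv)
  show "stamp_update n t1 x j = stamp_update n t2 x j"
  proof (cases "j < n")
    case True
    then have "(t1 j \<le> t1 (right_of n j)) = (t2 j \<le> t2 (right_of n j))"
      using marks by (auto simp: mark_of_def not_less[symmetric] split: if_splits)
    then show ?thesis
      using left_seen_cong[OF marks True] by (auto simp: stamp_update_def)
  qed (simp add: stamp_update_def)
qed

lemma stamp_update_probe_right:
  assumes "j < n" "5 \<le> n"
  shows "stamp_update n t (\<lambda>i. i = j \<or> i = right_of n j) j \<longleftrightarrow> mark_of n t j \<noteq> Right_first"
  using assms neighbours_distinct[OF assms] left_seen.simps[of n t _ j]
  by (auto simp: stamp_update_def mark_of_def)

lemma stamp_update_probe_left:
  assumes "j < n" "5 \<le> n" "mark_of n t j \<noteq> Right_first"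
  defines "l \<equiv> left_of n"
  shows "stamp_update n t (\<lambda>i. i \<in> {l (l j), l j, j, right_of n j}) j \<longleftrightarrow> mark_of n t j = Left_first"
proof -
  let ?x = "\<lambda>i. i \<in> {l (l j), l j, j, right_of n j}"
  have "\<not> left_seen n t ?x (l (l j))"
    using neighbours_distinct[OF assms(1,2)] left_seen.simps[of n t ?x "l (l j)"]
    by (simp add: l_def)
  then have "left_seen n t ?x (l j)"
    using left_seen.simps[of n t ?x "l j"] by (simp add: l_def)
  then have "left_seen n t ?x j \<longleftrightarrow> \<not> t (l j) < t j"
    using left_seen.simps[of n t ?x j] by (simp add: l_def)
  then show ?thesis
    using assms(3) by (auto simp: stamp_update_def mark_of_def l_def assms(1) split: if_splits)
qed

lemma mark_of_eq_if_stamp_update_eq: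
  assumes "j < n" "5 \<le> n" and same: "\<And>x. x \<in> configs n \<Longrightarrow> stamp_update n t1 x = stamp_update n t2 x"
  shows "mark_of n t1 j = mark_of n t2 j"
proof -
  let ?l = "left_of n"
  let ?x = "\<lambda>i. i = j \<or> i = right_of n j" and ?y = "\<lambda>i. i \<in> {?l (?l j), ?l j, j, right_of n j}"
  have "?x \<in> configs n" and "?y \<in> configs n"
    using assms(1) left_of_less[of j n] left_of_less[of "?l j" n] right_of_less[of j n]
    by (auto simp: configs_def)
  then have "stamp_update n t1 ?x j = stamp_update n t2 ?x j"
    and "stamp_update n t1 ?y j = stamp_update n t2 ?y j"
    using same by simp_all
  then have "(mark_of n t1 j = Right_first) = (mark_of n t2 j = Right_first)"
    and "mark_of n t1 j \<noteq> Right_first \<Longrightarrow> mark_of n t2 j \<noteq> Right_first \<Longrightarrow>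
      (mark_of n t1 j = Left_first) = (mark_of n t2 j = Left_first)"
    using stamp_update_probe_right[OF assms(1,2)] stamp_update_probe_left[OF assms(1,2)] by simp_all
  then show ?thesis
    by (cases "mark_of n t1 j"; cases "mark_of n t2 j") auto
qed

lemma stamp_dynamics_eq_iff:
  assumes "5 \<le> n"
  shows "stamp_dynamics n t1 = stamp_dynamics n t2 \<longleftrightarrow> pattern n t1 = pattern n t2"
proof
  assume "pattern n t1 = pattern n t2"
  then have "stamp_update n t1 = stamp_update n t2"
    using stamp_update_eq_if_pattern_eq by blast
  then show "stamp_dynamics n t1 = stamp_dynamics n t2"
    by (simp add: stamp_dynamics_def)
next
  assume dyn: "stamp_dynamics n t1 = stamp_dynamics n t2"
  have "stamp_update n t1 x = stamp_update n t2 x" if "x \<in> configs n" for x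
  proof -
    have "(x, stamp_update n t1 x) \<in> stamp_dynamics n t2"
      using dyn that by (auto simp: stamp_dynamics_def)
    then show ?thesis
      by (auto simp: stamp_dynamics_def)
  qed
  then have "mark_of n t1 j = mark_of n t2 j" if "j < n" for j
    using mark_of_eq_if_stamp_update_eq[OF that assms] by blast
  then show "pattern n t1 = pattern n t2"
    by (simp add: pattern_def)
qed

section \<open>Realisable patterns\<close>

definition compatible :: "mark \<Rightarrow> mark \<Rightarrow> bool" where
  "compatible a b \<longleftrightarrow> \<not> (a = Right_first \<and> b = Left_first)"

definition admissible :: "nat \<Rightarrow> mark list set" where
  "admissible n = {c. length c = n \<and> (\<forall>j<n. compatible (c ! j) (c ! right_of n j)) \<and>
     c \<noteq> replicate n Right_first \<and> (Left_first \<in> set c \<longrightarrow> Right_first \<in> set c)}"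

lemma pattern_in_admissible:
  assumes "1 \<le> n"
  shows "pattern n t \<in> admissible n"
proof -
  have "compatible (mark_of n t j) (mark_of n t (right_of n j))" if "j < n" for j
    using that by (auto simp: compatible_def mark_of_def split: if_splits)
  \<comment> \<open>Summing the stamps around the cycle excludes t (right_of n j) < t j for all j, and also
    t j \<le> t (right_of n j) for all j with one inequality strict.\<close>
  moreover have "\<exists>j<n. mark_of n t j \<noteq> Right_first"
  proof (rule ccontr)
    assume "\<not> ?thesis"
    then have "(\<Sum>j<n. t (right_of n j)) < (\<Sum>j<n. t j)"
      using assms
      by (intro sum_strict_mono) (auto simp: mark_of_def lessThan_empty_iff split: if_splits)
    then show False
      by (simp add: sum_right_of)
  qed
  moreover have "\<exists>j<n. mark_of n t j = Right_first"
    if left: "\<exists>j<n. mark_of n t j = Left_first"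
  proof (rule ccontr)
    assume "\<not> ?thesis"
    then have "(\<Sum>j<n. t j) < (\<Sum>j<n. t (right_of n j))"
    proof (intro sum_strict_mono_ex1)
      obtain j where "j < n" "mark_of n t j = Left_first"
        using left by blast
      then show "\<exists>i\<in>{..<n}. t i < t (right_of n i)"
        by (intro bexI[of _ "left_of n j"]) (auto simp: mark_of_def left_of_less split: if_splits)
    qed (auto simp: mark_of_def not_less split: if_splits)
    then show False
      by (simp add: sum_right_of)
  qed
  moreover have "pattern n t \<noteq> replicate n Right_first"
    if "j < n" "mark_of n t j \<noteq> Right_first" for j
    using that by (metis nth_pattern nth_replicate)
  ultimately show ?thesis
    unfolding admissible_def mem_Collect_eq set_pattern
    by (auto simp: right_of_less image_iff eq_commute[of Left_first] eq_commute[of Right_first])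
qed

(* The maximal run of letters satisfying P in the cyclic word c from position j on; this is only
   correct if some letter of c fails P. *)
definition cyclic_run :: "('a \<Rightarrow> bool) \<Rightarrow> 'a list \<Rightarrow> nat \<Rightarrow> 'a list" where
  "cyclic_run P c j = takeWhile P (drop j c @ c)"

lemma cyclic_run_step:
  assumes "j < length c" and "\<exists>a\<in>set c. \<not> P a"
  shows "cyclic_run P c j =
    (if P (c ! j) then c ! j # cyclic_run P c (right_of (length c) j) else [])"
proof -
  have "drop j c = c ! j # drop (Suc j) c"
    using assms(1) by (rule Cons_nth_drop_Suc[symmetric])
  moreover have "takeWhile P (drop (Suc j) c @ c) = cyclic_run P c (right_of (length c) j)"
  proof (cases "Suc j = length c")
    case True
    then show ?thesis
      using assms(2) by (auto simp: cyclic_run_def right_of_def takeWhile_append1)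
  next
    case False
    then show ?thesis
      using assms(1) by (simp add: cyclic_run_def right_of_def)
  qed
  ultimately show ?thesis
    by (simp add: cyclic_run_def)
qed

lemma length_cyclic_run: "length (cyclic_run P c j) \<le> 2 * length c"
  unfolding cyclic_run_def by (rule order_trans[OF length_takeWhile_le]) simp

(* Maximal runs of Right_first get stamps above 2n that decrease to the right; any other cell gets
   2n minus the number of Left_first from its right neighbour up to the next Right_first, so these
   stamps increase exactly at Left_first. *)
definition stamps_of :: "mark list \<Rightarrow> nat \<Rightarrow> nat" where
  "stamps_of c j =
     (if c ! j = Right_first then 2 * length c + 1 + length (cyclic_run (\<lambda>m. m = Right_first) c j)
      else 2 * length c -
        count_list (cyclic_run (\<lambda>m. m \<noteq> Right_first) c (right_of (length c) j)) Left_first)"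

lemma stamps_of_gt_iff: "2 * length c < stamps_of c j \<longleftrightarrow> c ! j = Right_first"
  by (simp add: stamps_of_def not_less)

lemma stamps_of_decreasing:
  assumes "j < length c" and "\<exists>a\<in>set c. a \<noteq> Right_first" and "c ! j = Right_first"
  shows "stamps_of c (right_of (length c) j) < stamps_of c j"
proof (cases "c ! right_of (length c) j = Right_first")
  case True
  then show ?thesis
    using assms cyclic_run_step[OF assms(1,2)] by (simp add: stamps_of_def)
next
  case False
  then show ?thesis
    using assms(3) stamps_of_gt_iff[of c] by (meson not_less order_less_le_trans)
qed

lemma stamps_of_nondecreasing:
  assumes "j < length c" and "Right_first \<in> set c"
    and "c ! j \<noteq> Right_first" and "c ! right_of (length c) j \<noteq> Right_first"
  shows "stamps_of c j + (if c ! right_of (length c) j = Left_first then 1 else 0) =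
    stamps_of c (right_of (length c) j)"
proof -
  let ?r = "right_of (length c)"
  let ?count = "\<lambda>i. count_list (cyclic_run (\<lambda>m. m \<noteq> Right_first) c i) Left_first"
  have count: "?count (?r j) = (if c ! ?r j = Left_first then 1 else 0) + ?count (?r (?r j))"
    using assms right_of_less cyclic_run_step[OF _ bexI[OF _ assms(2)]] by auto
  have "?count (?r j) \<le> 2 * length c"
    using count_le_length length_cyclic_run by (metis order_trans)
  moreover have "stamps_of c j = 2 * length c - ?count (?r j)"
    and "stamps_of c (?r j) = 2 * length c - ?count (?r (?r j))"
    using assms by (simp_all add: stamps_of_def)
  ultimately show ?thesis
    unfolding count by (cases "c ! ?r j = Left_first") auto
qed

lemma pattern_stamps_of:
  assumes c: "c \<in> admissible n" and "Right_first \<in> set c"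
  shows "pattern n (stamps_of c) = c"
proof -
  let ?t = "stamps_of c" and ?r = "right_of n" and ?l = "left_of n"
  have len: "length c = n"
    and compat: "\<And>j. j < n \<Longrightarrow> compatible (c ! j) (c ! ?r j)"
    and "c \<noteq> replicate n Right_first"
    using c by (auto simp: admissible_def)
  then have not_all_right: "\<exists>a\<in>set c. a \<noteq> Right_first"
    by (metis replicate_length_same)
  note threshold = stamps_of_gt_iff[of c, unfolded len]
  note decreasing = stamps_of_decreasing[of _ c, OF _ not_all_right, unfolded len]
  note nondecreasing = stamps_of_nondecreasing[of _ c, OF _ assms(2), unfolded len]
  have "mark_of n ?t j = c ! j" if "j < n" for j
  proof (cases "c ! j = Right_first")
    case True
    then show ?thesis
      using decreasing[OF that] by (simp add: mark_of_def)
  next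
    case False
    have "\<not> ?t (?r j) < ?t j"
      using nondecreasing[OF that False] threshold[of "?r j"] threshold[of j] False
      by (cases "c ! ?r j = Right_first") auto
    moreover have "?t (?l j) < ?t j \<longleftrightarrow> c ! j = Left_first"
    proof (cases "c ! ?l j = Right_first")
      case True
      then show ?thesis
        using compat[OF left_of_less[OF that]] threshold[of "?l j"] threshold[of j] False that
        by (auto simp: compatible_def)
    next
      case False
      then show ?thesis
        using nondecreasing[OF left_of_less[OF that] False] \<open>c ! j \<noteq> Right_first\<close> that
        by (auto split: if_splits)
    qed
    ultimately show ?thesis
      using False by (cases "c ! j") (auto simp: mark_of_def)
  qed
  then show ?thesis
    using len by (intro nth_equalityI) auto
qed

lemma range_pattern:
  assumes "1 \<le> n"
  shows "range (pattern n) = admissible n"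
proof (intro equalityI subsetI)
  fix c
  assume c: "c \<in> admissible n"
  show "c \<in> range (pattern n)"
  proof (cases "Right_first \<in> set c")
    case True
    then show ?thesis
      using pattern_stamps_of[OF c] by (metis rangeI)
  next
    case False
    have "c ! i = Neither_first" if "i < n" for i
      by (cases "c ! i") (use that False c nth_mem[of i c] in \<open>auto simp: admissible_def\<close>)
    then have "pattern n (\<lambda>_. 0) = c"
      using c by (intro nth_equalityI) (auto simp: admissible_def mark_of_def)
    then show ?thesis
      by (metis rangeI)
  qed
qed (use pattern_in_admissible[OF assms] in auto)

section \<open>Counting cyclic words\<close>

(* walks R k a b is the (a, b) entry of A^(k+1) for the adjacency matrix A of R. *)
fun walks :: "('a \<Rightarrow> 'a \<Rightarrow> bool) \<Rightarrow> nat \<Rightarrow> 'a \<Rightarrow> 'a \<Rightarrow> nat" where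
  "walks R 0 a b = (if R a b then 1 else 0)"
| "walks R (Suc k) a b = (\<Sum>c | R a c. walks R k c b)"

lemma card_UN_Cons_image:
  assumes "finite A" and "\<And>a. a \<in> A \<Longrightarrow> finite (S a)"
  shows "card (\<Union>a\<in>A. (#) a ` S a) = (\<Sum>a\<in>A. card (S a))"
proof -
  have "card (\<Union>a\<in>A. (#) a ` S a) = (\<Sum>a\<in>A. card ((#) a ` S a))"
    using assms by (intro card_UN_disjoint) auto
  also have "\<dots> = (\<Sum>a\<in>A. card (S a))"
    by (simp add: card_image)
  finally show ?thesis .
qed

lemma finite_lists_length: "finite {u :: 'a :: finite list. length u = k \<and> P u}"
  by (rule finite_subset[OF _ finite_lists_length_eq[OF finite_UNIV, of k]]) auto

lemma card_walks:
  fixes R :: "'a :: finite \<Rightarrow> 'a \<Rightarrow> bool"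
  shows "card {u. length u = k \<and> successively R (a # u @ [b])} = walks R k a b"
proof (induction k arbitrary: a)
  case 0
  have "{u. length u = 0 \<and> successively R (a # u @ [b])} = (if R a b then {[]} else {})"
    by auto
  then show ?case
    by simp
next
  case (Suc k)
  have "{u. length u = Suc k \<and> successively R (a # u @ [b])} =
      (\<Union>c\<in>{c. R a c}. (#) c ` {u. length u = k \<and> successively R (c # u @ [b])})"
    by (auto simp: length_Suc_conv)
  then show ?case
    by (simp add: card_UN_Cons_image finite_lists_length Suc.IH)
qed

lemma card_cyclic_words:
  fixes R :: "'a :: finite \<Rightarrow> 'a \<Rightarrow> bool"
  shows "card {w. length w = Suc k \<and> successively R (w @ [hd w])} = (\<Sum>a\<in>UNIV. walks R k a a)"
proof -
  have "{w. length w = Suc k \<and> successively R (w @ [hd w])} =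
      (\<Union>a\<in>UNIV. (#) a ` {u. length u = k \<and> successively R (a # u @ [a])})"
    by (auto simp: length_Suc_conv image_iff)
  then show ?thesis
    by (simp add: card_UN_Cons_image finite_lists_length card_walks)
qed

lemma cyclic_words_conv_nth:
  assumes "1 \<le> n"
  shows "{w. length w = n \<and> successively R (w @ [hd w])} =
    {c. length c = n \<and> (\<forall>j<n. R (c ! j) (c ! right_of n j))}"
proof -
  have "successively R (c @ [hd c]) \<longleftrightarrow> (\<forall>j<n. R (c ! j) (c ! right_of n j))"
    if "length c = n" for c :: "'a list"
  proof -
    have "c \<noteq> []"
      using assms that by auto
    then have step: "(c @ [hd c]) ! Suc j = c ! right_of n j" if "j < n" for j
      using that \<open>length c = n\<close> by (auto simp: nth_append right_of_eq hd_conv_nth)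
    have "successively R (c @ [hd c]) \<longleftrightarrow> (\<forall>j<n. R ((c @ [hd c]) ! j) ((c @ [hd c]) ! Suc j))"
      using that by (simp add: successively_conv_nth)
    also have "\<dots> \<longleftrightarrow> (\<forall>j<n. R (c ! j) (c ! right_of n j))"
      using that by (simp add: step nth_append_left)
    finally show ?thesis .
  qed
  then show ?thesis
    by auto
qed

lemma UNIV_mark: "UNIV = {Right_first, Left_first, Neither_first}"
  using mark.exhaust by auto

instance mark :: finite
  by standard (simp add: UNIV_mark)

lemma compatible_successors:
  "{c. compatible a c} = (if a = Right_first then {Right_first, Neither_first} else UNIV)"
  using mark.exhaust by (auto simp: compatible_def)

(* Cayley-Hamilton: the adjacency matrix of compatible has characteristic polynomial
   x^3 - 3x^2 + x. *)
lemma walks_compatible_rec: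
  "walks compatible (k + 2) a b + walks compatible k a b = 3 * walks compatible (k + 1) a b"
  by (cases k; cases a; cases b)
    (simp_all add: numeral_eq_Suc compatible_successors UNIV_mark compatible_def)

lemma golden_pos: "0 < golden"
  by (simp add: golden_def add_pos_nonneg)

lemma inverse_golden: "inverse golden = (sqrt 5 - 1) / 2"
proof (rule inverse_unique)
  show "golden * ((sqrt 5 - 1) / 2) = 1"
    by (simp add: golden_def algebra_simps)
qed

lemma golden_sq_add_inverse_sq: "golden ^ 2 + inverse golden ^ 2 = 3"
  unfolding inverse_golden
  by (simp add: golden_def power2_eq_square algebra_simps add_divide_distrib[symmetric])

lemma card_cyclic_compatible:
  assumes "1 \<le> n"
  shows "real (card {w. length w = n \<and> successively compatible (w @ [hd w])}) =
    golden ^ (2 * n) + inverse golden ^ (2 * n)"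
proof -
  define q r where "q = golden ^ 2" and "r = inverse golden ^ 2"
  have "q + r = 3" and "q * r = 1"
    using golden_sq_add_inverse_sq golden_pos
    by (simp_all add: q_def r_def power_mult_distrib[symmetric])
  have "q ^ (k + 2) + r ^ (k + 2) =
      (q + r) * (q ^ (k + 1) + r ^ (k + 1)) - q * r * (q ^ k + r ^ k)" for k
    by (simp add: algebra_simps)
  then have rec: "q ^ (k + 2) + r ^ (k + 2) = 3 * (q ^ (k + 1) + r ^ (k + 1)) - (q ^ k + r ^ k)"
    for k
    using \<open>q + r = 3\<close> \<open>q * r = 1\<close> by simp
  define T where "T k = (\<Sum>a\<in>UNIV. walks compatible k a a)" for k
  have T_rec: "T (k + 2) + T k = 3 * T (k + 1)" for k
    unfolding T_def sum.distrib[symmetric] walks_compatible_rec sum_distrib_left ..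
  have T: "real (T k) = q ^ (k + 1) + r ^ (k + 1)" for k
  proof (induction k rule: induct_nat_012)
    case 0
    then show ?case
      using \<open>q + r = 3\<close> by (simp add: T_def UNIV_mark compatible_def)
  next
    case 1
    then show ?case
      using rec[of 0] \<open>q + r = 3\<close>
      by (simp add: T_def UNIV_mark compatible_successors compatible_def)
  next
    case (ge2 k)
    then show ?case
      using rec[of "Suc k"] T_rec[of k] by (simp add: algebra_simps)
  qed
  obtain k where "n = Suc k"
    using assms by (metis Suc_le_D One_nat_def)
  moreover have "golden ^ (2 * n) + inverse golden ^ (2 * n) = q ^ n + r ^ n"
    by (simp add: q_def r_def power_mult)
  ultimately show ?thesis
    using T[of k] by (simp add: card_cyclic_words T_def)
qed

lemma card_admissible:
  assumes "1 \<le> n"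
  shows "card (admissible n) + 2 ^ n =
    card {w. length w = n \<and> successively compatible (w @ [hd w])}"
proof -
  define cyc where "cyc = {c. length c = n \<and> (\<forall>j<n. compatible (c ! j) (c ! right_of n j))}"
  define with_right where "with_right = {c \<in> cyc. Right_first \<in> set c}"
  define no_right where "no_right = {c. set c \<subseteq> {Left_first, Neither_first} \<and> length c = n}"
  have "{w. length w = n \<and> successively compatible (w @ [hd w])} = cyc"
    unfolding cyc_def using assms by (rule cyclic_words_conv_nth)
  moreover have "cyc = with_right \<union> no_right"
  proof -
    have "c ! j \<noteq> Right_first" if "c \<in> no_right" "j < n" for c j
      using that nth_mem[of j c] by (force simp: no_right_def)
    then have "no_right \<subseteq> cyc"
      by (auto simp: cyc_def no_right_def compatible_def)
    moreover have "set c \<subseteq> {Left_first, Neither_first}" if "Right_first \<notin> set c" for c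
      using that mark.exhaust by auto
    ultimately show ?thesis
      by (auto simp: with_right_def no_right_def cyc_def)
  qed
  moreover have "with_right \<inter> no_right = {}"
    by (auto simp: with_right_def no_right_def)
  moreover have "card no_right = 2 ^ n"
    by (simp add: no_right_def card_lists_length_eq numeral_2_eq_2)
  moreover have
    "admissible n = (with_right - {replicate n Right_first}) \<union> {replicate n Neither_first}"
  proof -
    have "c = replicate n Neither_first"
      if "length c = n" "Right_first \<notin> set c" "Left_first \<notin> set c" for c
      using that mark.exhaust by (metis replicate_length_same)
    then show ?thesis
      using assms by (auto simp: admissible_def with_right_def cyc_def compatible_def)
  qed
  moreover have "replicate n Right_first \<in> with_right"
    using assms by (simp add: with_right_def cyc_def compatible_def right_of_less)
  moreover have "replicate n Neither_first \<notin> with_right"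
    by (simp add: with_right_def)
  moreover have "finite with_right" "finite no_right"
    by (simp_all add: with_right_def cyc_def no_right_def finite_lists_length
        finite_lists_length_eq)
  moreover from calculation have "0 < card with_right"
    by (auto simp: card_gt_0_iff)
  ultimately show ?thesis
    by (simp add: card_Un_disjoint card_Diff_singleton del: card_gt_0_iff)
qed

lemma card_range_eq_if_kernel_eq:
  assumes "\<And>a b. f a = f b \<longleftrightarrow> g a = g b"
  shows "card (range f) = card (range g)"
proof -
  define h where "h y = f (SOME a. g a = y)" for y
  have h: "h (g a) = f a" for a
    using someI[of "\<lambda>b. g b = g a" a] assms by (simp add: h_def)
  then have "range f = h ` range g"
    by (auto simp: image_iff)
  moreover have "inj_on h (range g)"
    by (auto simp: inj_on_def h assms)
  ultimately show ?thesis
    by (simp add: card_image)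
qed

theorem mainTheorem6:
  fixes n :: nat
  assumes "n \<ge> 5"
  shows "sensitivity n =
    (golden ^ (2 * n) + inverse golden ^ (2 * n) - 2 ^ n) / (3 ^ n - 2 ^ (n + 1) + 2)"
proof -
  have "card (dyn_set n) = card (range (pattern n))"
    unfolding dyn_set_eq_range_stamp_dynamics
    by (rule card_range_eq_if_kernel_eq) (rule stamp_dynamics_eq_iff[OF assms])
  also have "\<dots> = card (admissible n)"
    using assms by (simp add: range_pattern)
  moreover have "real (card (admissible n) + 2 ^ n) = golden ^ (2 * n) + inverse golden ^ (2 * n)"
    using assms by (simp only: card_admissible card_cyclic_compatible)
  ultimately show ?thesis
    unfolding sensitivity_def by (simp add: algebra_simps)
qed

end
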